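(* Let $\Gamma,T,\ast$ and $W$ be as in the context. Then $W$ has no non-stationary closed paths; that is, there is no sequence of $p$-cells $\sigma_0,\sigma_1,\dots,\sigma_r$ of $\mathcal{UD}^n\Gamma$ with $\sigma_r=\sigma_0$, $\sigma_1\ne\sigma_0$, such that for each $i$, if $W(\sigma_i)$ is undefined then $\sigma_{i+1}=\sigma_i$, and otherwise $\sigma_{i+1}\neq\sigma_i$ and $\sigma_{i+1}$ is a face of $W(\sigma_i)$. Consequently $W$ is a discrete gradient vector field on $\mathcal{UD}^n\Gamma$.
   Context: $\Gamma$ is a finite connected graph and $n\ge1$; $d(v)$ is the degree of $v$. $\mathcal{UD}^n\Gamma$ is the cell complex whose cells are unordered $n$-element sets $c=\{c_1,\dots,c_n\}$ where each $c_i$ is a vertex or an edge of $\Gamma$ and the closed sets $c_i$ are pairwise disjoint; the dimension of $c$ is the number of edges in it, and faces are obtained by replacing edges by endpoints. Fix a maximal tree $T$ of $\Gamma$ and a vertex $\ast$ of degree $1$ in $T$. For vertices $v_1,v_2$, $v_1\wedge v_2$ is the endpoint other than $\ast$ of $[\ast,v_1]\cap[\ast,v_2]$ (geodesics in $T$), or $\ast$ if this is $\{\ast\}$. Directions (edges) at each vertex $v$ are labelled $0,\dots,d(v)-1$, label $0$ for the edge of $T$ towards $\ast$ (the direction from $\ast$ in $T$ gets label $1$); $g(v_1,v_2)$ is the label of the direction from $v_1$ on the $T$-geodesic to $v_2$, and $g(v,v)=0$. Order: $v_1\le v_2$ iff, with $v_3=v_1\wedge v_2$, $v_3=v_1$ or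 ($v_3\ne v_1$ and $g(v_3,v_1)<g(v_3,v_2)$); this is a linear order. For an edge $e$, $\iota(e)\ge\tau(e)$ are its endpoints; for $v\ne\ast$, $e(v)$ is the edge of $T$ at $v$ in direction $0$. A vertex $v\neq\ast$ of a cell $c$ is unblocked in $c$ if $e(v)$ is disjoint from every element of $c$ other than $v$; then the elementary reduction of $c$ from $v$ replaces $v$ by $e(v)$. Otherwise (and always for $v=\ast$) $v$ is blocked. The principal reduction of $c$ is the elementary reduction from the smallest unblocked vertex of $c$ (if any). Define $W$: for a $0$-cell $c$, $W(c)$ is its principal reduction if it exists; for $i>0$ and an $i$-cell $c$, $W(c)$ is its principal reduction if this exists and $c$ is not in the image of $W$ on $(i-1)$-cells; otherwise undefined. A discrete gradient vector field is an injective such assignment $W$ (from $i$-cells to $(i+1)$-cells having them as regular faces, with image and domain disjoint) admitting no non-stationary closed paths. *)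

theory Defs
  imports Main
begin

record ('v, 'e) graph =
  verts :: "'v set"
  edges :: "'e set"
  src   :: "'e \<Rightarrow> 'v"
  tgt   :: "'e \<Rightarrow> 'v"

definition wf_graph :: "('v,'e) graph \<Rightarrow> bool" where
  "wf_graph G \<longleftrightarrow> finite (verts G) \<and> finite (edges G) \<and>
     (\<forall>e\<in>edges G. src G e \<in> verts G \<and> tgt G e \<in> verts G)"

definition adj :: "('v,'e) graph \<Rightarrow> 'e set \<Rightarrow> 'v \<Rightarrow> 'v \<Rightarrow> bool" where
  "adj G F u w \<longleftrightarrow> (\<exists>e\<in>F. (src G e = u \<and> tgt G e = w) \<or> (src G e = w \<and> tgt G e = u))"

definition vwalk :: "('v,'e) graph \<Rightarrow> 'e set \<Rightarrow> 'v list \<Rightarrow> bool" where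
  "vwalk G F xs \<longleftrightarrow> xs \<noteq> [] \<and> successively (adj G F) xs"

definition connected_by :: "('v,'e) graph \<Rightarrow> 'e set \<Rightarrow> bool" where
  "connected_by G F \<longleftrightarrow> (\<forall>u\<in>verts G. \<forall>w\<in>verts G.
      \<exists>xs. vwalk G F xs \<and> hd xs = u \<and> last xs = w)"

definition connected_graph :: "('v,'e) graph \<Rightarrow> bool" where
  "connected_graph G \<longleftrightarrow> connected_by G (edges G)"

definition epath :: "('v,'e) graph \<Rightarrow> 'e set \<Rightarrow> 'v list \<Rightarrow> 'e list \<Rightarrow> bool" where
  "epath G F vs es \<longleftrightarrow> length vs = Suc (length es) \<and>
     (\<forall>i<length es. es!i \<in> F \<and>
        ((src G (es!i) = vs!i \<and> tgt G (es!i) = vs!Suc i) \<or>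
         (src G (es!i) = vs!Suc i \<and> tgt G (es!i) = vs!i)))"

text \<open>F has no cycle (closed trail with at least one edge; loops and
  parallel edges are cycles).\<close>
definition acyclic_edges :: "('v,'e) graph \<Rightarrow> 'e set \<Rightarrow> bool" where
  "acyclic_edges G F \<longleftrightarrow> \<not> (\<exists>vs es. epath G F vs es \<and> es \<noteq> [] \<and> distinct es \<and> hd vs = last vs)"

definition spanning_tree :: "('v,'e) graph \<Rightarrow> 'e set \<Rightarrow> bool" where
  "spanning_tree G T \<longleftrightarrow> T \<subseteq> edges G \<and> acyclic_edges G T \<and> connected_by G T"

definition tdegree :: "('v,'e) graph \<Rightarrow> 'e set \<Rightarrow> 'v \<Rightarrow> nat" where
  "tdegree G T v = card {e\<in>T. src G e = v \<or> tgt G e = v}"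

text \<open>Directions (half-edges) at v: (e,True) is e at src e, (e,False) is e at tgt e.
  A loop gives two directions.\<close>
definition dirs :: "('v,'e) graph \<Rightarrow> 'v \<Rightarrow> ('e \<times> bool) set" where
  "dirs G v = {(e,b). e \<in> edges G \<and> (if b then src G e else tgt G e) = v}"

definition deg :: "('v,'e) graph \<Rightarrow> 'v \<Rightarrow> nat" where
  "deg G v = card (dirs G v)"

text \<open>the direction of a non-loop edge e at its endpoint v\<close>
definition hdir :: "('v,'e) graph \<Rightarrow> 'e \<Rightarrow> 'v \<Rightarrow> 'e \<times> bool" where
  "hdir G e v = (e, src G e = v)"

definition tgeo :: "('v,'e) graph \<Rightarrow> 'e set \<Rightarrow> 'v \<Rightarrow> 'v \<Rightarrow> 'v list" where
  "tgeo G T a b = (THE xs. vwalk G T xs \<and> distinct xs \<and> hd xs = a \<and> last xs = b)"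

definition tedge :: "('v,'e) graph \<Rightarrow> 'e set \<Rightarrow> 'v \<Rightarrow> 'v \<Rightarrow> 'e" where
  "tedge G T a b = (THE e. e \<in> T \<and> ((src G e = a \<and> tgt G e = b) \<or> (src G e = b \<and> tgt G e = a)))"

definition edown :: "('v,'e) graph \<Rightarrow> 'e set \<Rightarrow> 'v \<Rightarrow> 'v \<Rightarrow> 'e" where
  "edown G T s v = tedge G T v (tgeo G T v s ! 1)"

definition gdir :: "('v,'e) graph \<Rightarrow> 'e set \<Rightarrow> ('v \<Rightarrow> 'e \<times> bool \<Rightarrow> nat) \<Rightarrow> 'v \<Rightarrow> 'v \<Rightarrow> nat" where
  "gdir G T lab v1 v2 = (if v1 = v2 then 0
      else lab v1 (hdir G (tedge G T v1 (tgeo G T v1 v2 ! 1)) v1))"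

text \<open>v1 \<and> v2: last vertex of [s,v1] \<inter> [s,v2] (which is an initial segment of [s,v1])\<close>
definition meet :: "('v,'e) graph \<Rightarrow> 'e set \<Rightarrow> 'v \<Rightarrow> 'v \<Rightarrow> 'v \<Rightarrow> 'v" where
  "meet G T s v1 v2 = last (filter (\<lambda>x. x \<in> set (tgeo G T s v2)) (tgeo G T s v1))"

definition vle :: "('v,'e) graph \<Rightarrow> 'e set \<Rightarrow> 'v \<Rightarrow> ('v \<Rightarrow> 'e \<times> bool \<Rightarrow> nat) \<Rightarrow> 'v \<Rightarrow> 'v \<Rightarrow> bool" where
  "vle G T s lab v1 v2 = (let v3 = meet G T s v1 v2 in
      v3 = v1 \<or> (v3 \<noteq> v1 \<and> gdir G T lab v3 v1 < gdir G T lab v3 v2))"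

definition good_labelling :: "('v,'e) graph \<Rightarrow> 'e set \<Rightarrow> 'v \<Rightarrow> ('v \<Rightarrow> 'e \<times> bool \<Rightarrow> nat) \<Rightarrow> bool" where
  "good_labelling G T s lab \<longleftrightarrow>
     (\<forall>v\<in>verts G. bij_betw (lab v) (dirs G v) {..<deg G v}) \<and>
     (\<forall>v\<in>verts G - {s}. lab v (hdir G (edown G T s v) v) = 0)"

type_synonym ('v,'e) cell = "('v + 'e) set"

text \<open>closed set of a vertex/edge, recorded by its vertices (distinct edges have
  disjoint interiors)\<close>
definition cl :: "('v,'e) graph \<Rightarrow> 'v + 'e \<Rightarrow> 'v set" where
  "cl G x = (case x of Inl v \<Rightarrow> {v} | Inr e \<Rightarrow> {src G e, tgt G e})"

definition is_cell :: "('v,'e) graph \<Rightarrow> nat \<Rightarrow> ('v,'e) cell \<Rightarrow> bool" where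
  "is_cell G n c \<longleftrightarrow> finite c \<and> card c = n \<and>
     (\<forall>x\<in>c. case x of Inl v \<Rightarrow> v \<in> verts G | Inr e \<Rightarrow> e \<in> edges G) \<and>
     pairwise (\<lambda>x y. cl G x \<inter> cl G y = {}) c"

definition cdim :: "('v,'e) cell \<Rightarrow> nat" where
  "cdim c = card {e. Inr e \<in> c}"

definition face :: "('v,'e) graph \<Rightarrow> ('v,'e) cell \<Rightarrow> ('v,'e) cell \<Rightarrow> bool" where
  "face G c' c \<longleftrightarrow> (\<exists>f. (\<forall>x\<in>c. case x of Inl v \<Rightarrow> f x = x
        | Inr e \<Rightarrow> f x \<in> {x, Inl (src G e), Inl (tgt G e)}) \<and> c' = f ` c)"

definition regular_face :: "('v,'e) graph \<Rightarrow> ('v,'e) cell \<Rightarrow> ('v,'e) cell \<Rightarrow> bool" where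
  "regular_face G c' c \<longleftrightarrow> (\<exists>e. Inr e \<in> c \<and> src G e \<noteq> tgt G e \<and>
      (\<exists>u\<in>{src G e, tgt G e}. c' = insert (Inl u) (c - {Inr e})))"

definition unblocked :: "('v,'e) graph \<Rightarrow> 'e set \<Rightarrow> 'v \<Rightarrow> ('v,'e) cell \<Rightarrow> 'v \<Rightarrow> bool" where
  "unblocked G T s c v \<longleftrightarrow> Inl v \<in> c \<and> v \<noteq> s \<and>
     (\<forall>x\<in>c. x \<noteq> Inl v \<longrightarrow> cl G (Inr (edown G T s v)) \<inter> cl G x = {})"

definition elem_red :: "('v,'e) graph \<Rightarrow> 'e set \<Rightarrow> 'v \<Rightarrow> ('v,'e) cell \<Rightarrow> 'v \<Rightarrow> ('v,'e) cell" where
  "elem_red G T s c v = insert (Inr (edown G T s v)) (c - {Inl v})"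

definition principal_red ::
  "('v,'e) graph \<Rightarrow> 'e set \<Rightarrow> 'v \<Rightarrow> ('v \<Rightarrow> 'e \<times> bool \<Rightarrow> nat) \<Rightarrow> ('v,'e) cell \<Rightarrow> ('v,'e) cell option" where
  "principal_red G T s lab c =
     (if \<exists>v. unblocked G T s c v
      then Some (elem_red G T s c
              (THE v. unblocked G T s c v \<and> (\<forall>w. unblocked G T s c w \<longrightarrow> vle G T s lab v w)))
      else None)"

fun Wdim :: "('v,'e) graph \<Rightarrow> nat \<Rightarrow> 'e set \<Rightarrow> 'v \<Rightarrow> ('v \<Rightarrow> 'e \<times> bool \<Rightarrow> nat) \<Rightarrow>
    nat \<Rightarrow> ('v,'e) cell \<Rightarrow> ('v,'e) cell option" where
  "Wdim G n T s lab 0 c = principal_red G T s lab c"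
| "Wdim G n T s lab (Suc i) c =
     (if \<exists>c'. is_cell G n c' \<and> cdim c' = i \<and> Wdim G n T s lab i c' = Some c
      then None else principal_red G T s lab c)"

definition Wfield :: "('v,'e) graph \<Rightarrow> nat \<Rightarrow> 'e set \<Rightarrow> 'v \<Rightarrow> ('v \<Rightarrow> 'e \<times> bool \<Rightarrow> nat) \<Rightarrow>
    ('v,'e) cell \<Rightarrow> ('v,'e) cell option" where
  "Wfield G n T s lab c = Wdim G n T s lab (cdim c) c"

definition has_nonstationary_closed_path ::
  "('v,'e) graph \<Rightarrow> nat \<Rightarrow> (('v,'e) cell \<Rightarrow> ('v,'e) cell option) \<Rightarrow> bool" where
  "has_nonstationary_closed_path G n W \<longleftrightarrow>
     (\<exists>(\<sigma> :: nat \<Rightarrow> ('v,'e) cell) r p. 0 < r \<and>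
        (\<forall>i\<le>r. is_cell G n (\<sigma> i) \<and> cdim (\<sigma> i) = p) \<and>
        \<sigma> r = \<sigma> 0 \<and> \<sigma> 1 \<noteq> \<sigma> 0 \<and>
        (\<forall>i<r. (W (\<sigma> i) = None \<longrightarrow> \<sigma> (Suc i) = \<sigma> i) \<and>
               (\<forall>\<tau>. W (\<sigma> i) = Some \<tau> \<longrightarrow> \<sigma> (Suc i) \<noteq> \<sigma> i \<and> face G (\<sigma> (Suc i)) \<tau>)))"

definition discrete_gradient_vector_field ::
  "('v,'e) graph \<Rightarrow> nat \<Rightarrow> (('v,'e) cell \<Rightarrow> ('v,'e) cell option) \<Rightarrow> bool" where
  "discrete_gradient_vector_field G n W \<longleftrightarrow>
     (\<forall>c \<tau>. is_cell G n c \<and> W c = Some \<tau> \<longrightarrow>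
         is_cell G n \<tau> \<and> cdim \<tau> = Suc (cdim c) \<and> regular_face G c \<tau>) \<and>
     (\<forall>c c' \<tau>. is_cell G n c \<and> is_cell G n c' \<and> W c = Some \<tau> \<and> W c' = Some \<tau> \<longrightarrow> c = c') \<and>
     (\<forall>c \<tau>. is_cell G n c \<and> W c = Some \<tau> \<longrightarrow> W \<tau> = None) \<and>
     \<not> has_nonstationary_closed_path G n W"

end

theory Submission
  imports Defs "HOL-Library.List_Lexorder" "HOL-Library.Sublist"
begin

text \<open>Vertices are compared through the sequences of direction labels read along their paths from the
  root, lexicographically. \<open>W\<close> is injective because a cell reduced from two different cells would, after
  undoing both reductions, have a principal vertex making one of them a \<open>W\<close>-image.

  For closed paths, weigh a vertex at depth \<open>d\<close> by \<open>2d\<close> and a tree edge by the sum of the depths of its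
  ends. Along a \<open>W\<close>-path the total weight never increases, and it stays constant only if each step reduces
  from the principal vertex and then undoes the reduction from another vertex. On a closed path of such
  steps, the edge \<open>e(a)\<close> created by reducing from the least principal vertex \<open>a\<close> is removed at some later
  step, and the cell there is a \<open>W\<close>-image, where \<open>W\<close> is undefined.\<close>

section \<open>Lists, walks and cells\<close>

lemma prefix_of_diverging:
  assumes "prefix p (r @ a # xs)" and "prefix p (r @ b # ys)" and "a \<noteq> b"
  shows "prefix p r"
proof (rule ccontr)
  assume "\<not> prefix p r"
  moreover have "prefix r (r @ a # xs)"
    by simp
  ultimately obtain c q where "p = r @ c # q"
    using assms(1) prefix_same_cases by (metis prefix_def neq_Nil_conv append_Nil2)
  then show False
    using assms by simp
qed

lemma list_le_append: "(xs :: 'a :: linorder list) \<le> xs @ ys"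
  by (induction xs) (auto simp: Nil_le_Cons)

lemma diverging_list_le_iff:
  "a \<noteq> b \<Longrightarrow> (r @ a # xs \<le> r @ b # ys) \<longleftrightarrow> (a :: 'a :: linorder) < b"
  by (induction r) auto

lemma successively_to_distinct:
  assumes "successively R xs" and "xs \<noteq> []"
  shows "\<exists>ys. successively R ys \<and> distinct ys \<and> ys \<noteq> [] \<and> hd ys = hd xs \<and> last ys = last xs"
  using assms
proof (induction "length xs" arbitrary: xs rule: less_induct)
  case less
  show ?case
  proof (cases "distinct xs")
    case True
    then show ?thesis using less.prems by blast
  next
    case False
    then obtain as y bs cs where xs: "xs = as @ [y] @ bs @ [y] @ cs"
      using not_distinct_decomp by blast
    let ?xs' = "as @ [y] @ cs"
    have "successively R ((as @ [y]) @ bs @ (y # cs))"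
      using \<open>successively R xs\<close> unfolding xs by simp
    then have "successively R (as @ [y])" "successively R (y # cs)"
      unfolding successively_append_iff by auto
    then have "successively R ?xs'"
      by (auto simp: successively_append_iff)
    moreover have "hd ?xs' = hd xs" "last ?xs' = last xs"
      unfolding xs by (cases as; simp) (cases cs; simp)
    moreover have "length ?xs' < length xs"
      unfolding xs by simp
    ultimately show ?thesis
      using less.hyps[of ?xs'] by auto
  qed
qed

text \<open>A coincidence forces \<open>j = i + 1\<close> and \<open>i = j + 1\<close> modulo the length.\<close>
lemma closed_list_steps_distinct:
  assumes dist: "distinct zs" and long: "3 \<le> length zs" and ij: "i < j" "j < length zs"
  defines "vs \<equiv> zs @ [hd zs]"
  shows "{vs ! i, vs ! Suc i} \<noteq> {vs ! j, vs ! Suc j}"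
proof
  let ?L = "length zs"
  have "zs \<noteq> []"
    using long by auto
  have vs_less: "k < ?L \<Longrightarrow> vs ! k = zs ! k" for k
    by (simp add: vs_def nth_append)
  have vs_L: "vs ! ?L = zs ! 0"
    using \<open>zs \<noteq> []\<close> by (simp add: vs_def hd_conv_nth)
  have zs_inj: "zs ! i = zs ! j \<Longrightarrow> i < ?L \<Longrightarrow> j < ?L \<Longrightarrow> i = j" for i j
    using dist by (simp add: nth_eq_iff_index_eq)
  assume "{vs ! i, vs ! Suc i} = {vs ! j, vs ! Suc j}"
  moreover have "vs ! i \<noteq> vs ! j"
    using ij zs_inj[of i j] vs_less[of i] vs_less[of j] by auto
  ultimately have i_to: "vs ! i = vs ! Suc j" and j_to: "vs ! Suc i = vs ! j"
    by (metis doubleton_eq_iff)+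
  have "Suc i = j"
    using j_to ij zs_inj[of "Suc i" j] vs_less[of "Suc i"] vs_less[of j] by simp
  moreover have "Suc j = ?L"
  proof (rule ccontr)
    assume "Suc j \<noteq> ?L"
    then show False
      using i_to ij zs_inj[of i "Suc j"] vs_less[of i] vs_less[of "Suc j"] by simp
  qed
  ultimately show False
    using i_to ij long \<open>zs \<noteq> []\<close> zs_inj[of i 0] vs_less[of i] vs_L by simp
qed

definition joins :: "('v,'e) graph \<Rightarrow> 'e \<Rightarrow> 'v \<Rightarrow> 'v \<Rightarrow> bool" where
  "joins G e u w \<longleftrightarrow> {src G e, tgt G e} = {u, w}"

lemma adj_iff_joins: "adj G F u w \<longleftrightarrow> (\<exists>e\<in>F. joins G e u w)"
  by (auto simp: adj_def joins_def doubleton_eq_iff)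

lemma epath_iff_joins:
  "epath G F vs es \<longleftrightarrow> length vs = Suc (length es) \<and>
     (\<forall>i<length es. es ! i \<in> F \<and> joins G (es ! i) (vs ! i) (vs ! Suc i))"
  by (auto simp: epath_def joins_def doubleton_eq_iff)

lemma epath_of_walk:
  assumes "successively (adj G F) vs" and "vs \<noteq> []"
  shows "\<exists>es. epath G F vs es"
  using assms(2,1)
proof (induction vs rule: list_nonempty_induct)
  case (single x)
  show ?case
    by (rule exI[of _ "[]"]) (simp add: epath_def)
next
  case (cons x xs)
  then obtain es where es: "epath G F xs es"
    by (auto simp: successively_Cons)
  obtain e where "e \<in> F" "joins G e x (hd xs)"
    using cons by (auto simp: adj_iff_joins successively_Cons)
  then have "epath G F (x # xs) (e # es)"
    using es \<open>xs \<noteq> []\<close> by (auto simp: epath_iff_joins hd_conv_nth less_Suc_eq_0_disj)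
  then show ?case ..
qed

lemma hdir_in_dirs: "e \<in> edges G \<Longrightarrow> v \<in> {src G e, tgt G e} \<Longrightarrow> hdir G e v \<in> dirs G v"
  by (auto simp: hdir_def dirs_def)

lemma cl_Inl [simp]: "cl G (Inl v) = {v}"
  by (simp add: cl_def)

lemma cl_nonempty [simp]: "cl G x \<noteq> {}"
  by (cases x) (auto simp: cl_def)

lemma cell_Inl_verts: "is_cell G n c \<Longrightarrow> Inl v \<in> c \<Longrightarrow> v \<in> verts G"
  by (force simp: is_cell_def)

lemma cell_Inr_edges: "is_cell G n c \<Longrightarrow> Inr e \<in> c \<Longrightarrow> e \<in> edges G"
  by (force simp: is_cell_def)

lemma cell_disjoint: "is_cell G n c \<Longrightarrow> x \<in> c \<Longrightarrow> y \<in> c \<Longrightarrow> x \<noteq> y \<Longrightarrow> cl G x \<inter> cl G y = {}"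
  by (auto simp: is_cell_def pairwise_def)

lemma is_cell_replace:
  assumes c: "is_cell G n c" and "y \<in> c"
    and x: "case x of Inl v \<Rightarrow> v \<in> verts G | Inr e \<Rightarrow> e \<in> edges G"
    and disj: "\<forall>z\<in>c - {y}. cl G x \<inter> cl G z = {}"
  shows "is_cell G n (insert x (c - {y}))"
proof -
  have "x \<notin> c - {y}"
  proof
    assume "x \<in> c - {y}"
    then have "cl G x \<inter> cl G x = {}"
      using disj by blast
    then show False
      by simp
  qed
  moreover have "finite c" "0 < card c"
    using c \<open>y \<in> c\<close> by (auto simp: is_cell_def card_gt_0_iff)
  ultimately have "card (insert x (c - {y})) = n"
    using \<open>y \<in> c\<close> c by (simp add: card_insert_if is_cell_def)
  moreover have "pairwise (\<lambda>x y. cl G x \<inter> cl G y = {}) (c - {y})"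
    using c unfolding is_cell_def by (meson Diff_subset pairwise_subset)
  then have "pairwise (\<lambda>x y. cl G x \<inter> cl G y = {}) (insert x (c - {y}))"
    using disj by (simp add: pairwise_insert inf_commute)
  moreover have "\<forall>z\<in>insert x (c - {y}). case z of Inl v \<Rightarrow> v \<in> verts G | Inr e \<Rightarrow> e \<in> edges G"
    using c x by (simp add: is_cell_def)
  ultimately show ?thesis
    using \<open>finite c\<close> by (simp add: is_cell_def)
qed

lemma cdim_insert_Inl [simp]: "cdim (insert (Inl v) c) = cdim c"
  and cdim_remove_Inl [simp]: "cdim (c - {Inl v}) = cdim c"
  by (simp_all add: cdim_def)

lemma cdim_insert_Inr: "finite c \<Longrightarrow> Inr e \<notin> c \<Longrightarrow> cdim (insert (Inr e) c) = Suc (cdim c)"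
proof -
  assume "finite c" "Inr e \<notin> c"
  then have "finite {e. Inr e \<in> c}" "e \<notin> {e. Inr e \<in> c}"
    using finite_vimageI[of c Inr] by (auto simp: vimage_def)
  moreover have "{f. Inr f \<in> insert (Inr e) c} = insert e {e. Inr e \<in> c}"
    by auto
  ultimately show ?thesis
    by (simp add: cdim_def)
qed

lemma cdim_remove_Inr: "finite c \<Longrightarrow> Inr e \<in> c \<Longrightarrow> cdim c = Suc (cdim (c - {Inr e}))"
  using cdim_insert_Inr[of "c - {Inr e}" e] by (simp add: insert_absorb)

lemma face_map:
  assumes "face G c \<tau>"
  obtains g where "c = g ` \<tau>" and "\<And>v. Inl v \<in> \<tau> \<Longrightarrow> g (Inl v) = Inl v"
    and "\<And>e. Inr e \<in> \<tau> \<Longrightarrow> g (Inr e) \<in> {Inr e, Inl (src G e), Inl (tgt G e)}"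
proof -
  obtain g where g: "\<forall>x\<in>\<tau>. case x of Inl v \<Rightarrow> g x = x
      | Inr e \<Rightarrow> g x \<in> {x, Inl (src G e), Inl (tgt G e)}" and "c = g ` \<tau>"
    using assms unfolding face_def by blast
  moreover have "Inl v \<in> \<tau> \<Longrightarrow> g (Inl v) = Inl v" for v
    using g by force
  moreover have "Inr e \<in> \<tau> \<Longrightarrow> g (Inr e) \<in> {Inr e, Inl (src G e), Inl (tgt G e)}" for e
    using g by force
  ultimately show ?thesis
    using that by blast
qed

lemma edges_of_face_map:
  assumes g_Inl: "\<And>v. Inl v \<in> \<tau> \<Longrightarrow> g (Inl v) = Inl v"
    and g_Inr: "\<And>e. Inr e \<in> \<tau> \<Longrightarrow> g (Inr e) \<in> {Inr e, Inl (src G e), Inl (tgt G e)}"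
  shows "{e. Inr e \<in> g ` \<tau>} = {e. Inr e \<in> \<tau> \<and> g (Inr e) = Inr e}"
proof (intro set_eqI iffI)
  fix e
  assume "e \<in> {e. Inr e \<in> g ` \<tau>}"
  then obtain x where "x \<in> \<tau>" "g x = Inr e"
    by auto
  then show "e \<in> {e. Inr e \<in> \<tau> \<and> g (Inr e) = Inr e}"
    using g_Inl g_Inr[of "projr x"] by (cases x) auto
qed force

lemma face_of_codim_one:
  assumes \<tau>: "is_cell G n \<tau>" and c: "is_cell G n c" and "face G c \<tau>"
    and dim: "cdim \<tau> = Suc (cdim c)"
  obtains f u where "Inr f \<in> \<tau>" and "u \<in> {src G f, tgt G f}" and "Inl u \<notin> \<tau>"
    and "c = insert (Inl u) (\<tau> - {Inr f})"
proof -
  obtain g where c_eq: "c = g ` \<tau>" and g_Inl: "\<And>v. Inl v \<in> \<tau> \<Longrightarrow> g (Inl v) = Inl v"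
    and g_Inr: "\<And>e. Inr e \<in> \<tau> \<Longrightarrow> g (Inr e) \<in> {Inr e, Inl (src G e), Inl (tgt G e)}"
    using face_map[OF \<open>face G c \<tau>\<close>] by blast
  have fin: "finite \<tau>" "finite {e. Inr e \<in> \<tau>}"
    using \<tau> finite_vimageI[of \<tau> Inr] by (auto simp: is_cell_def vimage_def)
  have "card (g ` \<tau>) = card \<tau>"
    using \<tau> c c_eq by (simp add: is_cell_def)
  then have inj: "inj_on g \<tau>"
    using eq_card_imp_inj_on fin by blast
  define M where "M = {e. Inr e \<in> \<tau> \<and> g (Inr e) \<noteq> Inr e}"
  have "{e. Inr e \<in> c} = {e. Inr e \<in> \<tau>} - M" "M \<subseteq> {e. Inr e \<in> \<tau>}"
    using edges_of_face_map[of \<tau> g, OF g_Inl g_Inr] c_eq by (auto simp: M_def)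
  then have "card M = 1"
    using dim fin(2) card_Diff_subset[of M] card_mono[of "{e. Inr e \<in> \<tau>}" M]
    by (simp add: cdim_def finite_subset)
  then obtain f where M: "M = {f}"
    using card_1_singletonE by blast
  then have f: "Inr f \<in> \<tau>" "g (Inr f) \<noteq> Inr f"
    by (auto simp: M_def)
  then obtain u where u: "g (Inr f) = Inl u" "u \<in> {src G f, tgt G f}"
    using g_Inr by blast
  have "g x = x" if "x \<in> \<tau> - {Inr f}" for x
    using that g_Inl M by (cases x) (auto simp: M_def)
  then have "g ` (\<tau> - {Inr f}) = \<tau> - {Inr f}"
    by simp
  moreover have "g ` \<tau> = insert (g (Inr f)) (g ` (\<tau> - {Inr f}))"
    using f(1) by blast
  ultimately have "c = insert (Inl u) (\<tau> - {Inr f})"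
    using c_eq u(1) by simp
  moreover have "Inl u \<notin> \<tau>"
    using inj f(1) g_Inl u(1) by (metis Inl_Inr_False inj_on_contraD)
  ultimately show ?thesis
    using that f(1) u(2) by blast
qed

lemma nonstationary_closed_path_periodic:
  assumes "has_nonstationary_closed_path G n W"
  obtains S :: "nat \<Rightarrow> ('v,'e) cell" and r p where "0 < r"
    and "\<And>i. is_cell G n (S i) \<and> cdim (S i) = p"
    and "\<And>i. S (i + r) = S i"
    and "\<And>i. \<exists>\<tau>. W (S i) = Some \<tau> \<and> S (Suc i) \<noteq> S i \<and> face G (S (Suc i)) \<tau>"
proof -
  obtain \<sigma> :: "nat \<Rightarrow> ('v,'e) cell" and r p where r: "0 < r"
    and cells: "\<forall>i\<le>r. is_cell G n (\<sigma> i) \<and> cdim (\<sigma> i) = p"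
    and closed: "\<sigma> r = \<sigma> 0" and moves: "\<sigma> 1 \<noteq> \<sigma> 0"
    and step: "\<forall>i<r. (W (\<sigma> i) = None \<longrightarrow> \<sigma> (Suc i) = \<sigma> i) \<and>
      (\<forall>\<tau>. W (\<sigma> i) = Some \<tau> \<longrightarrow> \<sigma> (Suc i) \<noteq> \<sigma> i \<and> face G (\<sigma> (Suc i)) \<tau>)"
    using assms unfolding has_nonstationary_closed_path_def by blast
  define S where "S i = \<sigma> (i mod r)" for i
  have S_Suc: "S (Suc i) = \<sigma> (Suc (i mod r))" for i
    using closed r by (auto simp: S_def mod_Suc)
  have S_step: "(W (S i) = None \<longrightarrow> S (Suc i) = S i) \<and>
      (\<forall>\<tau>. W (S i) = Some \<tau> \<longrightarrow> S (Suc i) \<noteq> S i \<and> face G (S (Suc i)) \<tau>)" for i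
    using step[rule_format, of "i mod r"] r unfolding S_Suc by (simp add: S_def)
  have S_period: "S (i + r) = S i" for i
    by (simp add: S_def)
  have S_cell: "is_cell G n (S i) \<and> cdim (S i) = p" for i
    using cells r by (simp add: S_def)
  have defined: "W (S i) \<noteq> None" for i
  proof
    assume stuck: "W (S i) = None"
    have "i + (Suc i * r - i) = Suc i * r"
      using r by (cases r) auto
    moreover have "S (i + k) = S i" for k
      by (induction k) (use S_step stuck in auto)
    ultimately have "S (Suc i * r) = S i"
      by metis
    then have "S 0 = S i"
      by (simp add: S_def)
    then have "\<sigma> 1 = \<sigma> 0"
      using step stuck r by (simp add: S_def)
    then show False
      using moves by simp
  qed
  have "\<exists>\<tau>. W (S i) = Some \<tau> \<and> S (Suc i) \<noteq> S i \<and> face G (S (Suc i)) \<tau>" for i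
    using defined[of i] S_step[of i] by auto
  then show ?thesis
    using that[of r S p] r S_cell S_period by blast
qed

lemma antimono_periodic_const:
  fixes f :: "nat \<Rightarrow> 'a :: order"
  assumes "\<And>i. f (Suc i) \<le> f i" and "\<And>i. f (i + r) = f i" and "0 < r"
  shows "f (Suc i) = f i"
proof -
  have "f (i + r) \<le> f (Suc i)"
    using lift_Suc_antimono_le[of f] assms(1,3) by simp
  then show ?thesis
    using assms(1)[of i] assms(2)[of i] by simp
qed

section \<open>Paths in a rooted spanning tree\<close>

locale rooted_spanning_tree =
  fixes G :: "('v,'e) graph" and T :: "'e set" and s :: 'v
  assumes wf: "wf_graph G" and spanning: "spanning_tree G T" and root_vert: "s \<in> verts G"
begin

abbreviation V :: "'v set" where "V \<equiv> verts G"
abbreviation tadj :: "'v \<Rightarrow> 'v \<Rightarrow> bool" where "tadj \<equiv> adj G T"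

lemma tree_subset_edges: "T \<subseteq> edges G"
  using spanning by (simp add: spanning_tree_def)

lemma finite_verts: "finite V"
  using wf by (simp add: wf_graph_def)

lemma edge_ends_verts: "e \<in> edges G \<Longrightarrow> src G e \<in> V \<and> tgt G e \<in> V"
  using wf by (simp add: wf_graph_def)

lemma tadj_iff: "tadj u w \<longleftrightarrow> (\<exists>e\<in>T. joins G e u w)"
  by (rule adj_iff_joins)

lemma tadj_sym: "tadj u w = tadj w u"
  by (auto simp: adj_def)

lemma successively_tadj_rev [simp]: "successively tadj (rev xs) \<longleftrightarrow> successively tadj xs"
  by (simp add: tadj_sym)

lemma tadj_verts: "tadj u w \<Longrightarrow> u \<in> V \<and> w \<in> V"
  using tree_subset_edges edge_ends_verts by (auto simp: adj_def)

lemma tree_edge_not_loop: "e \<in> T \<Longrightarrow> src G e \<noteq> tgt G e"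
proof
  assume "e \<in> T" and "src G e = tgt G e"
  then have "epath G T [src G e, src G e] [e]"
    by (simp add: epath_def)
  then show False
    using spanning unfolding spanning_tree_def acyclic_edges_def by fastforce
qed

lemma tree_edge_unique:
  assumes "e1 \<in> T" "e2 \<in> T" "joins G e1 u w" "joins G e2 u w"
  shows "e1 = e2"
proof (rule ccontr)
  assume "e1 \<noteq> e2"
  moreover have "epath G T [u, w, u] [e1, e2]"
    using assms by (auto simp: epath_iff_joins joins_def less_Suc_eq nth_Cons')
  ultimately show False
    using spanning unfolding spanning_tree_def acyclic_edges_def by fastforce
qed

lemma no_long_closed_walk:
  assumes dist: "distinct zs" and walk: "successively tadj (zs @ [hd zs])"
  shows "length zs < 3"
proof (rule ccontr)
  assume long: "\<not> length zs < 3"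
  define vs where "vs = zs @ [hd zs]"
  obtain es where es: "epath G T vs es"
    using epath_of_walk walk unfolding vs_def by blast
  have len_es: "length es = length zs"
    using es by (simp add: epath_def vs_def)
  have ends: "k < length zs \<Longrightarrow> {src G (es ! k), tgt G (es ! k)} = {vs ! k, vs ! Suc k}" for k
    using es len_es by (simp add: epath_iff_joins joins_def)
  have "es ! i \<noteq> es ! j" if "i < j" "j < length zs" for i j
    using closed_list_steps_distinct[OF dist _ that] long ends[of i] ends[of j] that
    by (auto simp: vs_def)
  then have "distinct es"
    unfolding distinct_conv_nth len_es by (metis linorder_neqE_nat)
  moreover have "hd vs = last vs" "es \<noteq> []"
    using long len_es by (cases zs; auto simp: vs_def)+
  ultimately show False
    using es spanning unfolding spanning_tree_def acyclic_edges_def by blast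
qed

definition tree_path :: "'v \<Rightarrow> 'v \<Rightarrow> 'v list \<Rightarrow> bool" where
  "tree_path a b xs \<longleftrightarrow> successively tadj xs \<and> distinct xs \<and> xs \<noteq> [] \<and> hd xs = a \<and> last xs = b"

lemma tree_path_rev: "tree_path a b xs \<Longrightarrow> tree_path b a (rev xs)"
  by (auto simp: tree_path_def hd_rev last_rev simp del: successively_rev)

text \<open>Two walks out of \<open>x\<close> through different neighbours would close up, at their first common vertex,
  into a cycle of \<open>T\<close>.\<close>
lemma tree_walks_branch:
  assumes walks: "successively tadj (x # xs)" "successively tadj (x # ys)"
    and dist: "distinct (x # xs)" "distinct (x # ys)"
    and "xs \<noteq> []" "ys \<noteq> []" and heads: "hd xs \<noteq> hd ys"
  shows "last xs \<noteq> last ys"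
proof
  assume "last xs = last ys"
  then obtain p c q where xs: "xs = p @ c # q" and "c \<in> set ys" and p_out: "\<forall>y\<in>set p. y \<notin> set ys"
    using split_list_first_prop[of xs "\<lambda>y. y \<in> set ys"] \<open>xs \<noteq> []\<close> \<open>ys \<noteq> []\<close>
    by (metis last_in_set)
  then obtain r t where ys: "ys = r @ c # t"
    by (metis split_list)
  define zs where "zs = x # p @ c # rev r"
  have "p \<noteq> [] \<or> r \<noteq> []"
    using heads xs ys by auto
  then have "3 \<le> length zs"
    by (auto simp: zs_def Suc_le_eq)
  moreover have "distinct zs"
    using dist xs ys p_out by (auto simp: zs_def)
  moreover have "successively tadj (zs @ [hd zs])"
  proof -
    have "successively tadj ((x # p @ [c]) @ q)"
      using walks(1) xs by simp
    then have fwd: "successively tadj (x # p @ [c])"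
      by (simp only: successively_append_iff)
    have "successively tadj ((x # r @ [c]) @ t)"
      using walks(2) ys by simp
    then have "successively tadj (x # r @ [c])"
      by (simp only: successively_append_iff)
    then have bwd: "successively tadj (c # rev r @ [x])"
      using successively_tadj_rev[of "x # r @ [c]"] by (simp del: successively_rev)
    have "zs @ [hd zs] = (x # p) @ (c # rev r @ [x])"
      by (simp add: zs_def)
    moreover have "successively tadj (x # p) \<and> tadj (last (x # p)) c"
      using fwd successively_append_iff[of tadj "x # p" "[c]"] by simp
    ultimately show ?thesis
      using bwd successively_append_iff[of tadj "x # p" "c # rev r @ [x]"]
      by (simp del: successively_rev)
  qed
  ultimately show False
    using no_long_closed_walk by fastforce
qed

lemma tree_path_unique: "tree_path a b xs \<Longrightarrow> tree_path a b ys \<Longrightarrow> xs = ys"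
proof (induction xs arbitrary: a ys)
  case Nil
  then show ?case by (simp add: tree_path_def)
next
  case (Cons x xs')
  obtain ys' where ys: "ys = x # ys'"
    using Cons.prems by (cases ys) (auto simp: tree_path_def)
  have walks: "successively tadj (x # xs')" "successively tadj (x # ys')"
    and dist: "distinct (x # xs')" "distinct (x # ys')"
    using Cons.prems ys by (auto simp: tree_path_def)
  show ?case
  proof (cases "xs' = [] \<or> ys' = []")
    case True
    then show ?thesis
      using Cons.prems ys by (auto simp: tree_path_def) (metis last_in_set)+
  next
    case False
    then have "last xs' = last ys'"
      using Cons.prems ys by (simp add: tree_path_def)
    then have "hd xs' = hd ys'"
      using tree_walks_branch[OF walks dist] False by blast
    then show ?thesis
      using Cons.IH[of "hd xs'" ys'] Cons.prems ys walks False \<open>last xs' = last ys'\<close>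
      by (auto simp: tree_path_def successively_Cons)
  qed
qed

lemma tree_path_verts: "tree_path a b xs \<Longrightarrow> a \<in> V \<Longrightarrow> set xs \<subseteq> V"
proof (induction xs arbitrary: a)
  case (Cons x xs)
  then show ?case
    using tadj_verts by (cases xs) (auto simp: tree_path_def)
qed simp

lemma tgeo_eq: "tree_path a b xs \<Longrightarrow> tgeo G T a b = xs"
  unfolding tgeo_def
  by (rule the_equality) (auto simp: tree_path_def vwalk_def intro: tree_path_unique)

lemma tree_path_tgeo:
  assumes "a \<in> V" and "b \<in> V"
  shows "tree_path a b (tgeo G T a b)"
proof -
  obtain xs where "vwalk G T xs" "hd xs = a" "last xs = b"
    using spanning assms unfolding spanning_tree_def connected_by_def by blast
  then obtain ys where "tree_path a b ys"
    using successively_to_distinct[of tadj xs] by (auto simp: vwalk_def tree_path_def)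
  then show ?thesis
    using tgeo_eq by simp
qed

definition root_path :: "'v \<Rightarrow> 'v list" where
  "root_path v = tgeo G T s v"

definition parent :: "'v \<Rightarrow> 'v" where
  "parent v = tgeo G T v s ! 1"

definition depth :: "'v \<Rightarrow> nat" where
  "depth v = length (root_path v) - 1"

abbreviation down :: "'v \<Rightarrow> 'e" where
  "down v \<equiv> edown G T s v"

lemma tree_path_root_path: "v \<in> V \<Longrightarrow> tree_path s v (root_path v)"
  unfolding root_path_def using tree_path_tgeo root_vert by blast

lemma root_path_root: "root_path s = [s]"
  unfolding root_path_def by (rule tgeo_eq) (simp add: tree_path_def)

lemma root_path_verts: "v \<in> V \<Longrightarrow> set (root_path v) \<subseteq> V"
  using tree_path_root_path tree_path_verts root_vert by blast

lemma hd_root_path: "v \<in> V \<Longrightarrow> hd (root_path v) = s"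
  and last_root_path: "v \<in> V \<Longrightarrow> last (root_path v) = v"
  and root_path_nonempty: "v \<in> V \<Longrightarrow> root_path v \<noteq> []"
  and distinct_root_path: "v \<in> V \<Longrightarrow> distinct (root_path v)"
  using tree_path_root_path by (simp_all add: tree_path_def)

lemma root_path_prefix:
  assumes "v \<in> V" and "root_path v = r @ u # t"
  shows "root_path u = r @ [u]"
proof -
  have "successively tadj ((r @ [u]) @ t)" "distinct (r @ [u])" "hd (r @ [u]) = s"
    using tree_path_root_path[OF assms(1)] assms(2) by (auto simp: tree_path_def hd_append)
  then have "tree_path s u (r @ [u])"
    unfolding tree_path_def successively_append_iff by simp
  then show ?thesis
    unfolding root_path_def by (rule tgeo_eq)
qed

lemma prefix_root_path:
  assumes "v \<in> V" and "u \<in> set (root_path v)"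
  shows "prefix (root_path u) (root_path v)"
proof -
  obtain r t where "root_path v = r @ u # t"
    using assms(2) split_list by metis
  then show ?thesis
    using root_path_prefix[OF assms(1)] by simp
qed

lemma root_path_parent:
  assumes "v \<in> V" and "v \<noteq> s"
  shows "root_path v = root_path (parent v) @ [v]" and "parent v \<in> V" and "tadj (parent v) v"
proof -
  define q where "q = butlast (root_path v)"
  have q: "root_path v = q @ [v]"
    using assms(1) root_path_nonempty last_root_path unfolding q_def
    by (metis append_butlast_last_id)
  have "q \<noteq> []"
    using q hd_root_path assms by force
  have "tgeo G T v s = rev (root_path v)"
    using tgeo_eq tree_path_rev tree_path_root_path assms(1) by blast
  then have parent_eq: "parent v = last q"
    using q \<open>q \<noteq> []\<close> by (simp add: parent_def last_conv_nth rev_nth nth_append)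
  have "root_path (last q) = q"
    using root_path_prefix[OF assms(1), of "butlast q" "last q" "[v]"] q \<open>q \<noteq> []\<close> by simp
  then show "root_path v = root_path (parent v) @ [v]"
    using q parent_eq by simp
  show "parent v \<in> V"
    using root_path_verts[OF assms(1)] q parent_eq \<open>q \<noteq> []\<close> by auto
  have "successively tadj (q @ [v])"
    using tree_path_root_path[OF assms(1)] q by (simp add: tree_path_def)
  then show "tadj (parent v) v"
    using parent_eq \<open>q \<noteq> []\<close> by (simp add: successively_append_iff)
qed

lemma root_path_non_root:
  assumes "v \<in> V" and "root_path v = r @ y # t" and "r \<noteq> []"
  shows "y \<in> V" and "y \<noteq> s"
proof -
  show "y \<in> V"
    using root_path_verts[OF assms(1)] assms(2) by auto
  have "s \<in> set r"
    using hd_root_path[OF assms(1)] assms(2,3) by (metis hd_append2 hd_in_set)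
  then show "y \<noteq> s"
    using distinct_root_path[OF assms(1)] assms(2) by auto
qed

lemma parent_in_root_path:
  assumes "v \<in> V" and "root_path v = r @ x # y # t"
  shows "parent y = x"
proof -
  have "root_path y = (r @ [x]) @ [y]"
    using root_path_prefix[OF assms(1), of "r @ [x]" y t] assms(2) by simp
  moreover have "y \<in> V" "y \<noteq> s"
    using root_path_non_root[OF assms(1), of "r @ [x]" y t] assms(2) by simp_all
  ultimately have "root_path (parent y) = r @ [x]" "parent y \<in> V"
    using root_path_parent[of y] by auto
  then show ?thesis
    using last_root_path by force
qed

lemma depth_parent: "v \<in> V \<Longrightarrow> v \<noteq> s \<Longrightarrow> depth v = Suc (depth (parent v))"
  using root_path_parent[of v] tree_path_root_path[of "parent v"]
  by (cases "root_path (parent v)") (auto simp: depth_def tree_path_def)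

lemma depth_eq_0_iff: "v \<in> V \<Longrightarrow> depth v = 0 \<longleftrightarrow> v = s"
  using depth_parent[of v] by (cases "v = s") (auto simp: depth_def root_path_root)

lemma depth_less_card: "v \<in> V \<Longrightarrow> depth v < card V"
proof -
  assume v: "v \<in> V"
  then have "length (root_path v) = card (set (root_path v))"
    using tree_path_root_path by (simp add: tree_path_def distinct_card)
  also have "\<dots> \<le> card V"
    using root_path_verts[OF v] finite_verts by (simp add: card_mono)
  finally show ?thesis
    using tree_path_root_path[OF v] by (cases "root_path v") (auto simp: depth_def tree_path_def)
qed

lemma tedge_eq_The: "tedge G T u w = (THE e. e \<in> T \<and> joins G e u w)"
  by (simp add: tedge_def joins_def doubleton_eq_iff)

lemma tedge_joins:
  assumes "tadj u w"
  shows "tedge G T u w \<in> T \<and> joins G (tedge G T u w) u w"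
proof -
  have "\<exists>!e. e \<in> T \<and> joins G e u w"
    using assms tree_edge_unique by (auto simp: tadj_iff)
  then show ?thesis
    unfolding tedge_eq_The by (rule theI')
qed

lemma tedge_eqI: "e \<in> T \<Longrightarrow> joins G e u w \<Longrightarrow> tedge G T u w = e"
  using tedge_joins tree_edge_unique tadj_iff by blast

lemma down_joins_parent:
  assumes "v \<in> V" and "v \<noteq> s"
  shows "down v \<in> T" and "joins G (down v) v (parent v)"
  using tedge_joins[of v "parent v"] root_path_parent[OF assms] tadj_sym
  by (simp_all add: edown_def parent_def)

lemma down_ends: "v \<in> V \<Longrightarrow> v \<noteq> s \<Longrightarrow> {src G (down v), tgt G (down v)} = {v, parent v}"
  using down_joins_parent by (simp add: joins_def)

lemma down_inj:
  assumes "v \<in> V" "v \<noteq> s" "w \<in> V" "w \<noteq> s" and "down v = down w"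
  shows "v = w"
proof (rule ccontr)
  assume "v \<noteq> w"
  then have "v = parent w" "w = parent v"
    using down_ends[of v] down_ends[of w] assms by (auto simp: doubleton_eq_iff)
  then show False
    using depth_parent[of v] depth_parent[of w] assms by simp
qed

lemma parent_if_not_in_root_path:
  assumes "tadj u w" and "w \<notin> set (root_path u)"
  shows "w \<noteq> s" and "parent w = u"
proof -
  have "u \<in> V" "w \<in> V"
    using tadj_verts assms(1) by auto
  then have "tree_path s w (root_path u @ [w])"
    using tree_path_root_path[of u] assms by (auto simp: tree_path_def successively_append_iff)
  then have path_w: "root_path w = root_path u @ [w]"
    unfolding root_path_def by (rule tgeo_eq)
  show "w \<noteq> s"
    using assms(2) hd_root_path[OF \<open>u \<in> V\<close>] root_path_nonempty[OF \<open>u \<in> V\<close>]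
    by (metis hd_in_set)
  then have "root_path (parent w) = root_path u"
    using root_path_parent[OF \<open>w \<in> V\<close>] path_w by simp
  then show "parent w = u"
    using last_root_path root_path_parent(2)[OF \<open>w \<in> V\<close> \<open>w \<noteq> s\<close>] \<open>u \<in> V\<close> by metis
qed

lemma down_surj:
  assumes "e \<in> T"
  obtains x where "x \<in> V" "x \<noteq> s" "down x = e"
proof -
  have "\<exists>x y. tadj y x \<and> x \<notin> set (root_path y) \<and> joins G e x y"
  proof -
    let ?a = "src G e" and ?b = "tgt G e"
    have ab: "tadj ?a ?b" "?a \<noteq> ?b" "joins G e ?a ?b" "joins G e ?b ?a"
      using assms tree_edge_not_loop by (auto simp: tadj_iff joins_def)
    then have "?a \<in> V" "?b \<in> V"
      using tadj_verts by auto
    have "\<not> (?b \<in> set (root_path ?a) \<and> ?a \<in> set (root_path ?b))"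
      using prefix_root_path[OF \<open>?a \<in> V\<close>, of ?b] prefix_root_path[OF \<open>?b \<in> V\<close>, of ?a]
        last_root_path[OF \<open>?a \<in> V\<close>] last_root_path[OF \<open>?b \<in> V\<close>] ab(2)
      by (metis prefix_order.antisym)
    then show ?thesis
      using ab tadj_sym by blast
  qed
  then obtain x y where xy: "tadj y x" "x \<notin> set (root_path y)" "joins G e x y"
    by blast
  then have "x \<noteq> s" "parent x = y" "x \<in> V"
    using parent_if_not_in_root_path[OF xy(1,2)] tadj_verts by auto
  then have "down x = e"
    using tree_edge_unique[OF down_joins_parent(1) assms down_joins_parent(2)] xy(3) by simp
  then show ?thesis
    using that \<open>x \<in> V\<close> \<open>x \<noteq> s\<close> by blast
qed

section \<open>Elementary reductions and the potential\<close>

abbreviation unbl :: "('v,'e) cell \<Rightarrow> 'v \<Rightarrow> bool" where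
  "unbl \<equiv> unblocked G T s"

abbreviation red :: "('v,'e) cell \<Rightarrow> 'v \<Rightarrow> ('v,'e) cell" where
  "red \<equiv> elem_red G T s"

definition unreduce :: "('v,'e) cell \<Rightarrow> 'v \<Rightarrow> ('v,'e) cell" where
  "unreduce c a = insert (Inl a) (c - {Inr (down a)})"

lemma cl_down: "v \<in> V \<Longrightarrow> v \<noteq> s \<Longrightarrow> cl G (Inr (down v)) = {v, parent v}"
  using down_ends by (simp add: cl_def)

lemma unblocked_verts: "is_cell G n c \<Longrightarrow> unbl c v \<Longrightarrow> v \<in> V \<and> v \<noteq> s"
  using cell_Inl_verts by (auto simp: unblocked_def)

lemma down_notin_if_unblocked: "unbl c v \<Longrightarrow> Inr (down v) \<notin> c"
  by (fastforce simp: unblocked_def)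

lemma reduce_cell:
  assumes c: "is_cell G n c" and v: "unbl c v"
  shows "is_cell G n (red c v)" and "cdim (red c v) = Suc (cdim c)"
    and "unreduce (red c v) v = c"
proof -
  have "v \<in> V" "v \<noteq> s" "Inl v \<in> c" "Inr (down v) \<notin> c"
    using unblocked_verts[OF c v] v down_notin_if_unblocked by (auto simp: unblocked_def)
  moreover have "down v \<in> edges G"
    using down_joins_parent \<open>v \<in> V\<close> \<open>v \<noteq> s\<close> tree_subset_edges by blast
  ultimately show "is_cell G n (red c v)" "cdim (red c v) = Suc (cdim c)" "unreduce (red c v) v = c"
    using is_cell_replace[OF c \<open>Inl v \<in> c\<close>, of "Inr (down v)"] v c cdim_insert_Inr[of "c - {Inl v}"]
    by (auto simp: elem_red_def unreduce_def unblocked_def is_cell_def)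
qed

lemma unreduce_cell:
  assumes c: "is_cell G n c" and e: "Inr (down a) \<in> c" and a: "a \<in> V" "a \<noteq> s"
  shows "is_cell G n (unreduce c a)" and "cdim c = Suc (cdim (unreduce c a))"
    and "unbl (unreduce c a) a" and "red (unreduce c a) a = c" and "Inl a \<notin> c"
proof -
  have disj: "\<forall>z\<in>c - {Inr (down a)}. cl G (Inr (down a)) \<inter> cl G z = {}"
    using cell_disjoint[OF c e] by blast
  then have disj_a: "\<forall>z\<in>c - {Inr (down a)}. cl G (Inl a) \<inter> cl G z = {}"
    using cl_down[OF a] by auto
  show "Inl a \<notin> c"
    using cell_disjoint[OF c e, of "Inl a"] cl_down[OF a] by auto
  show "is_cell G n (unreduce c a)"
    unfolding unreduce_def using is_cell_replace[OF c e] disj_a a by simp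
  show "cdim c = Suc (cdim (unreduce c a))"
    using cdim_remove_Inr[OF _ e] c by (simp add: unreduce_def is_cell_def)
  show "unbl (unreduce c a) a"
    using disj a by (auto simp: unblocked_def unreduce_def)
  show "red (unreduce c a) a = c"
    using e \<open>Inl a \<notin> c\<close> by (auto simp: elem_red_def unreduce_def)
qed

lemma unblocked_unreduce_mono:
  assumes "Inr (down a) \<in> c" and "a \<in> V" "a \<noteq> s" and "unbl c w"
  shows "unbl (unreduce c a) w"
proof -
  have "cl G (Inr (down w)) \<inter> cl G (Inr (down a)) = {}"
    using assms(1,4) by (auto simp: unblocked_def)
  then have "cl G (Inr (down w)) \<inter> cl G (Inl a) = {}"
    using cl_down[OF assms(2,3)] by auto
  then show ?thesis
    using assms(4) by (auto simp: unblocked_def unreduce_def)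
qed

text \<open>\<open>e(w)\<close> can only have met \<open>e(a)\<close> at a common parent: \<open>w\<close> is not an end of \<open>e(a)\<close>, and \<open>a\<close> is
  not an end of \<open>e(w)\<close> since \<open>a\<close> is a vertex of the undone cell.\<close>
lemma unblocked_unreduce_cases:
  assumes c: "is_cell G n c" and e: "Inr (down a) \<in> c" and a: "a \<in> V" "a \<noteq> s"
    and w: "unbl (unreduce c a) w" and "w \<noteq> a"
  shows "unbl c w \<or> parent w = parent a"
proof (rule ccontr)
  assume contra: "\<not> (unbl c w \<or> parent w = parent a)"
  have wc: "Inl w \<in> c"
    using w \<open>w \<noteq> a\<close> by (auto simp: unblocked_def unreduce_def)
  then have "w \<in> V" "w \<noteq> s"
    using cell_Inl_verts[OF c] w by (auto simp: unblocked_def)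
  obtain x where x: "x \<in> c" "x \<noteq> Inl w" "cl G (Inr (down w)) \<inter> cl G x \<noteq> {}"
    using contra wc \<open>w \<noteq> s\<close> by (auto simp: unblocked_def)
  then have "x = Inr (down a)"
    using w by (auto simp: unblocked_def unreduce_def)
  then have "{w, parent w} \<inter> {a, parent a} \<noteq> {}"
    using x cl_down a \<open>w \<in> V\<close> \<open>w \<noteq> s\<close> by simp
  moreover have "w \<noteq> parent a"
    using cell_disjoint[OF c wc e] cl_down[OF a] by auto
  moreover have "cl G (Inr (down w)) \<inter> cl G (Inl a) = {}"
    using w \<open>w \<noteq> a\<close> by (auto simp: unblocked_def unreduce_def)
  then have "parent w \<noteq> a"
    using cl_down \<open>w \<in> V\<close> \<open>w \<noteq> s\<close> by auto
  ultimately show False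
    using contra \<open>w \<noteq> a\<close> by auto
qed

lemma unreduce_commute: "unreduce (unreduce c a) b = unreduce (unreduce c b) a"
  by (auto simp: unreduce_def)

lemma reductions_collide:
  assumes c: "is_cell G n c" and c': "is_cell G n c'" and v: "unbl c v" and v': "unbl c' v'"
    and eq: "red c v = red c' v'" and "c \<noteq> c'"
  shows "Inr (down v') \<in> c" and "Inr (down v) \<in> c'" and "unreduce c v' = unreduce c' v"
    and "parent v \<noteq> parent v'"
proof -
  have V: "v \<in> V" "v \<noteq> s" "v' \<in> V" "v' \<noteq> s"
    using unblocked_verts[OF c v] unblocked_verts[OF c' v'] by auto
  have uc: "unreduce (red c v) v = c" "unreduce (red c v) v' = c'"
    using reduce_cell(3)[OF c v] reduce_cell(3)[OF c' v'] eq by simp_all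
  then have "v \<noteq> v'"
    using \<open>c \<noteq> c'\<close> by auto
  then have "down v \<noteq> down v'"
    using down_inj V by blast
  have "Inr (down v') \<in> red c v"
    using eq by (simp add: elem_red_def)
  then have in_red: "Inr (down v) \<in> red c v" "Inr (down v') \<in> red c v"
    by (simp_all add: elem_red_def)
  then show "Inr (down v') \<in> c"
    using \<open>down v \<noteq> down v'\<close> by (simp add: elem_red_def)
  have "Inr (down v) \<in> red c' v'"
    using in_red(1) eq by simp
  then show "Inr (down v) \<in> c'"
    using \<open>down v \<noteq> down v'\<close> by (simp add: elem_red_def)
  have "unreduce (unreduce (red c v) v) v' = unreduce (unreduce (red c v) v') v"
    by (rule unreduce_commute)
  then show "unreduce c v' = unreduce c' v"
    using uc by simp
  have "cl G (Inr (down v)) \<inter> cl G (Inr (down v')) = {}"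
    using cell_disjoint[OF reduce_cell(1)[OF c v] in_red] \<open>down v \<noteq> down v'\<close> by simp
  then show "parent v \<noteq> parent v'"
    using cl_down V by auto
qed

lemma unblocked_swap:
  assumes c: "is_cell G n c" and v: "unbl c v" and e: "Inr (down a) \<in> c" and a: "a \<in> V" "a \<noteq> s"
    and "a \<noteq> v" and w: "unbl (unreduce c a) w" and "w \<noteq> a" and "\<not> unbl c w"
    and siblings: "parent w = parent a"
  shows "unbl (unreduce (red c v) a) w"
proof -
  have wc: "Inl w \<in> c"
    using w \<open>w \<noteq> a\<close> by (auto simp: unblocked_def unreduce_def)
  have "w \<in> V" "w \<noteq> s" "v \<in> V" "v \<noteq> s" "w \<noteq> v" "Inl v \<in> c"
    using cell_Inl_verts[OF c wc] w unblocked_verts[OF c v] v \<open>\<not> unbl c w\<close>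
    by (auto simp: unblocked_def)
  have clw: "cl G (Inr (down w)) = {w, parent w}" and clv: "cl G (Inr (down v)) = {v, parent v}"
    using cl_down \<open>w \<in> V\<close> \<open>w \<noteq> s\<close> \<open>v \<in> V\<close> \<open>v \<noteq> s\<close> by auto
  have "cl G (Inr (down v)) \<inter> cl G (Inl w) = {}"
    using v wc \<open>w \<noteq> v\<close> by (auto simp: unblocked_def)
  moreover have "cl G (Inr (down w)) \<inter> cl G (Inl v) = {}"
    using w \<open>Inl v \<in> c\<close> \<open>w \<noteq> v\<close> \<open>a \<noteq> v\<close> by (auto simp: unblocked_def unreduce_def)
  moreover have "cl G (Inr (down v)) \<inter> cl G (Inr (down a)) = {}"
    using v e by (auto simp: unblocked_def)
  ultimately have "cl G (Inr (down w)) \<inter> cl G (Inr (down v)) = {}"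
    using clw clv cl_down[OF a] siblings \<open>w \<noteq> v\<close> by auto
  moreover have "cl G (Inr (down w)) \<inter> cl G (Inl a) = {}"
    using w \<open>w \<noteq> a\<close> by (auto simp: unblocked_def unreduce_def)
  ultimately show ?thesis
    using w wc \<open>w \<noteq> v\<close> \<open>w \<noteq> s\<close> by (auto simp: unblocked_def unreduce_def elem_red_def)
qed

text \<open>The weights make every elementary reduction lower the potential by exactly one, while a non-tree
  edge outweighs every vertex.\<close>
definition weight :: "'v + 'e \<Rightarrow> int" where
  "weight x = (case x of Inl w \<Rightarrow> 2 * int (depth w)
     | Inr f \<Rightarrow> if f \<in> T then int (depth (src G f)) + int (depth (tgt G f)) else 2 * int (card V))"

definition potential :: "('v,'e) cell \<Rightarrow> int" where
  "potential c = (\<Sum>x\<in>c. weight x)"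

lemma weight_down: "v \<in> V \<Longrightarrow> v \<noteq> s \<Longrightarrow> weight (Inr (down v)) = 2 * int (depth v) - 1"
  using down_joins_parent[of v] down_ends[of v] depth_parent[of v]
  by (auto simp: weight_def doubleton_eq_iff)

lemma weight_endpoint:
  assumes "f \<in> edges G" and "u \<in> {src G f, tgt G f}"
  shows "weight (Inl u) \<le> weight (Inr f) + 1"
    and "weight (Inl u) = weight (Inr f) + 1 \<Longrightarrow> u \<noteq> s \<and> f = down u"
proof -
  have "u \<in> V"
    using assms edge_ends_verts by blast
  have "weight (Inl u) = weight (Inr f) + 1 \<and> u \<noteq> s \<and> f = down u \<or> weight (Inl u) < weight (Inr f)"
  proof (cases "f \<in> T")
    case True
    then obtain x where x: "x \<in> V" "x \<noteq> s" "down x = f"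
      using down_surj by blast
    then have "u = x \<or> u = parent x"
      using assms(2) down_ends by blast
    then show ?thesis
      using x weight_down[OF x(1,2)] depth_parent[OF x(1,2)] by (auto simp: weight_def)
  next
    case False
    then show ?thesis
      using depth_less_card[OF \<open>u \<in> V\<close>] by (simp add: weight_def)
  qed
  then show "weight (Inl u) \<le> weight (Inr f) + 1"
    and "weight (Inl u) = weight (Inr f) + 1 \<Longrightarrow> u \<noteq> s \<and> f = down u"
    by auto
qed

lemma potential_reduce:
  assumes "is_cell G n c" and "unbl c v"
  shows "potential (red c v) = potential c - 1"
proof -
  have "finite c" "Inl v \<in> c" "Inr (down v) \<notin> c - {Inl v}" "v \<in> V" "v \<noteq> s"
    using assms down_notin_if_unblocked unblocked_verts by (auto simp: is_cell_def unblocked_def)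
  then show ?thesis
    using weight_down[of v]
    by (simp add: potential_def elem_red_def sum.insert_remove sum_diff1 weight_def)
qed

lemma potential_face_of_reduce:
  assumes c: "is_cell G n c" and v: "unbl c v" and c': "is_cell G n c'"
    and dim: "cdim c' = cdim c" and face: "face G c' (red c v)" and "c' \<noteq> c"
  shows "potential c' \<le> potential c"
    and "potential c' = potential c \<Longrightarrow>
      \<exists>x. x \<in> V \<and> x \<noteq> s \<and> x \<noteq> v \<and> Inr (down x) \<in> c \<and> c' = unreduce (red c v) x"
proof -
  let ?\<tau> = "red c v"
  have \<tau>: "is_cell G n ?\<tau>" "cdim ?\<tau> = Suc (cdim c')"
    using reduce_cell[OF c v] dim by auto
  obtain f u where f: "Inr f \<in> ?\<tau>" and u: "u \<in> {src G f, tgt G f}" and "Inl u \<notin> ?\<tau>"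
    and c'_eq: "c' = insert (Inl u) (?\<tau> - {Inr f})"
    using face_of_codim_one[OF \<tau>(1) c' face \<tau>(2)] by blast
  have "finite ?\<tau>"
    using \<tau>(1) by (simp add: is_cell_def)
  then have "potential c' = potential ?\<tau> - weight (Inr f) + weight (Inl u)"
    using c'_eq f \<open>Inl u \<notin> ?\<tau>\<close> by (simp add: potential_def sum_diff1)
  then have pot: "potential c' = potential c - 1 - weight (Inr f) + weight (Inl u)"
    using potential_reduce[OF c v] by simp
  have "f \<in> edges G"
    using cell_Inr_edges[OF \<tau>(1) f] .
  then show "potential c' \<le> potential c"
    using weight_endpoint(1)[OF _ u] pot by simp
  assume "potential c' = potential c"
  then have "u \<noteq> s" "f = down u"
    using weight_endpoint(2)[OF \<open>f \<in> edges G\<close> u] pot by simp_all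
  moreover have "u \<in> V"
    using u \<open>f \<in> edges G\<close> edge_ends_verts by blast
  moreover have "u \<noteq> v"
    using \<open>c' \<noteq> c\<close> c'_eq reduce_cell(3)[OF c v] \<open>f = down u\<close> by (auto simp: unreduce_def)
  moreover have "Inr (down u) \<in> c"
    using f \<open>f = down u\<close> \<open>u \<noteq> v\<close> down_inj[of u v] \<open>u \<in> V\<close> \<open>u \<noteq> s\<close> unblocked_verts[OF c v]
    by (auto simp: elem_red_def)
  ultimately show "\<exists>x. x \<in> V \<and> x \<noteq> s \<and> x \<noteq> v \<and> Inr (down x) \<in> c \<and> c' = unreduce (red c v) x"
    using c'_eq by (auto simp: unreduce_def)
qed

end

section \<open>The order on vertices\<close>

locale labelled_rooted_tree = rooted_spanning_tree G T s
    for G :: "('v,'e) graph" and T :: "'e set" and s :: 'v +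
  fixes lab :: "'v \<Rightarrow> 'e \<times> bool \<Rightarrow> nat"
  assumes lab_inj: "v \<in> verts G \<Longrightarrow> inj_on (lab v) (dirs G v)"
begin

definition branch_label :: "'v \<Rightarrow> nat" where
  "branch_label v = lab (parent v) (hdir G (down v) (parent v))"

definition key :: "'v \<Rightarrow> nat list" where
  "key v = map branch_label (tl (root_path v))"

lemma key_parent: "v \<in> V \<Longrightarrow> v \<noteq> s \<Longrightarrow> key v = key (parent v) @ [branch_label v]"
  using root_path_parent[of v] root_path_nonempty[of "parent v"] by (simp add: key_def)

lemma key_eq_Nil_iff: "v \<in> V \<Longrightarrow> key v = [] \<longleftrightarrow> v = s"
  using key_parent[of v] by (cases "v = s") (auto simp: key_def root_path_root)

lemma branch_label_inj:
  assumes "v \<in> V" "v \<noteq> s" "w \<in> V" "w \<noteq> s" and "parent v = parent w" and "v \<noteq> w"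
  shows "branch_label v \<noteq> branch_label w"
proof -
  let ?p = "parent v"
  have dirs: "hdir G (down x) ?p \<in> dirs G ?p" if "x \<in> V" "x \<noteq> s" "parent x = ?p" for x
    using down_joins_parent(1)[OF that(1,2)] down_ends[OF that(1,2)] tree_subset_edges that(3)
    by (intro hdir_in_dirs) auto
  have "down v \<noteq> down w"
    using down_inj assms by blast
  then have "hdir G (down v) ?p \<noteq> hdir G (down w) ?p"
    by (simp add: hdir_def)
  then have "lab ?p (hdir G (down v) ?p) \<noteq> lab ?p (hdir G (down w) ?p)"
    using lab_inj[OF root_path_parent(2)[OF assms(1,2)]] dirs assms by (auto dest: inj_onD)
  then show ?thesis
    using assms(5) by (simp add: branch_label_def)
qed

lemma inj_on_key: "inj_on key V"
proof -
  have "v = w" if "v \<in> V" "w \<in> V" "key v = key w" "depth v = d" for v w d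
    using that
  proof (induction d arbitrary: v w)
    case 0
    then have "v = s"
      using depth_eq_0_iff[of v] by simp
    then have "key w = []"
      using 0 key_eq_Nil_iff[of s] root_vert by simp
    then show ?case
      using 0 key_eq_Nil_iff[of w] \<open>v = s\<close> by simp
  next
    case (Suc d)
    have "v \<noteq> s"
      using Suc.prems depth_eq_0_iff[of v] by simp
    then have "w \<noteq> s"
      using Suc.prems key_eq_Nil_iff[of v] key_eq_Nil_iff[of w] by simp
    have keys: "key (parent v) = key (parent w)" and labels: "branch_label v = branch_label w"
      using key_parent[of v] key_parent[of w] Suc.prems \<open>v \<noteq> s\<close> \<open>w \<noteq> s\<close> by simp_all
    have "depth (parent v) = d"
      using depth_parent[of v] \<open>v \<noteq> s\<close> Suc.prems by simp
    moreover have "parent v \<in> V" "parent w \<in> V"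
      using root_path_parent(2)[of v] root_path_parent(2)[of w] \<open>v \<noteq> s\<close> \<open>w \<noteq> s\<close> Suc.prems
      by simp_all
    ultimately have "parent v = parent w"
      using Suc.IH keys by blast
    then show ?case
      using branch_label_inj[of v w] Suc.prems \<open>v \<noteq> s\<close> \<open>w \<noteq> s\<close> labels by blast
  qed
  then show ?thesis
    by (auto intro: inj_onI)
qed

lemma gdir_in_root_path:
  assumes "v \<in> V" and "root_path v = r @ x # y # t"
  shows "gdir G T lab x v = branch_label y"
proof -
  have "successively tadj (r @ (x # y # t))" "distinct (r @ (x # y # t))" "last (r @ x # y # t) = v"
    using tree_path_root_path[OF assms(1)] assms(2) by (simp_all add: tree_path_def)
  then have path: "tree_path x v (x # y # t)"
    by (simp add: tree_path_def successively_append_iff)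
  then have "tgeo G T x v = x # y # t"
    by (rule tgeo_eq)
  moreover have "x \<noteq> v"
  proof -
    have "x \<notin> set (y # t)" "last (y # t) = v"
      using path by (simp_all add: tree_path_def)
    then show ?thesis
      by (metis last_in_set list.distinct(1))
  qed
  moreover have "y \<in> V" "y \<noteq> s"
    using root_path_non_root[OF assms(1), of "r @ [x]" y t] assms(2) by simp_all
  moreover have "parent y = x"
    using parent_in_root_path[OF assms] .
  ultimately have "joins G (down y) x y" "down y \<in> T"
    using down_joins_parent[of y] by (simp_all add: joins_def insert_commute)
  then have "tedge G T x y = down y"
    by (rule tedge_eqI[rotated])
  then show ?thesis
    using \<open>tgeo G T x v = x # y # t\<close> \<open>x \<noteq> v\<close> \<open>parent y = x\<close>
    by (simp add: gdir_def branch_label_def)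
qed

lemma meet_eq_last_common:
  assumes "root_path v1 = r @ t1" and "r \<noteq> []" and "set r \<subseteq> set (root_path v2)"
    and "set t1 \<inter> set (root_path v2) = {}"
  shows "meet G T s v1 v2 = last r"
proof -
  have "filter (\<lambda>x. x \<in> set (root_path v2)) r = r"
    using assms(3) by (auto intro: filter_True)
  moreover have "filter (\<lambda>x. x \<in> set (root_path v2)) t1 = []"
    using assms(4) by (auto simp: filter_empty_conv)
  ultimately have "filter (\<lambda>x. x \<in> set (root_path v2)) (r @ t1) = r"
    by simp
  then show ?thesis
    using assms(1) by (simp add: meet_def root_path_def[symmetric])
qed

lemma vle_if_prefix:
  assumes v1: "v1 \<in> V" and t: "root_path v2 = root_path v1 @ t"
  shows "vle G T s lab v1 v2" and "key v1 \<le> key v2"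
proof -
  have "meet G T s v1 v2 = v1"
    using meet_eq_last_common[of v1 "root_path v1" "[]"] t root_path_nonempty last_root_path v1 by simp
  then show "vle G T s lab v1 v2"
    by (simp add: vle_def)
  have "key v2 = key v1 @ map branch_label t"
    using t root_path_nonempty[OF v1] by (simp add: key_def)
  then show "key v1 \<le> key v2"
    by (simp add: list_le_append)
qed

lemma not_vle_if_strict_prefix:
  assumes v1: "v1 \<in> V" and v2: "v2 \<in> V" and t: "root_path v1 = root_path v2 @ t" "t \<noteq> []"
  shows "\<not> vle G T s lab v1 v2" and "key v2 < key v1"
proof -
  have "set t \<inter> set (root_path v2) = {}"
    using distinct_root_path[OF v1] t by auto
  moreover have "v1 \<in> set t"
    using t last_root_path[OF v1] by (metis last_appendR last_in_set)
  ultimately have "meet G T s v1 v2 = v2" "v1 \<noteq> v2"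
    using meet_eq_last_common[OF t(1)] root_path_nonempty[OF v2] last_root_path[OF v2]
    by (auto, metis disjoint_iff last_in_set)
  then show "\<not> vle G T s lab v1 v2"
    by (simp add: vle_def gdir_def)
  have "key v1 = key v2 @ map branch_label t"
    using t root_path_nonempty[OF v2] by (simp add: key_def)
  then show "key v2 < key v1"
    using t(2) list_le_append[of "key v2"] by (auto simp: order_less_le)
qed

lemma diverging_root_paths_disjoint:
  assumes v1: "v1 \<in> V" and v2: "v2 \<in> V" and "a1 \<noteq> a2"
    and p1: "root_path v1 = r @ a1 # t1" and p2: "root_path v2 = r @ a2 # t2"
  shows "set (a1 # t1) \<inter> set (root_path v2) = {}"
proof -
  have "z \<notin> set (root_path v2)" if "z \<in> set (a1 # t1)" for z
  proof
    assume "z \<in> set (root_path v2)"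
    then have pz2: "prefix (root_path z) (r @ a2 # t2)"
      using prefix_root_path[OF v2] p2 by simp
    have "z \<in> set (root_path v1)"
      using that p1 by auto
    then have pz1: "prefix (root_path z) (r @ a1 # t1)"
      using prefix_root_path[OF v1] p1 by simp
    have "prefix (root_path z) r"
      using prefix_of_diverging[OF pz1 pz2 \<open>a1 \<noteq> a2\<close>] .
    moreover have "z \<in> set (root_path z)"
      using root_path_verts[OF v1] \<open>z \<in> set (root_path v1)\<close> last_root_path root_path_nonempty
      by (metis last_in_set subsetD)
    ultimately have "z \<in> set r"
      using set_mono_prefix by blast
    then show False
      using distinct_root_path[OF v1] p1 that by auto
  qed
  then show ?thesis
    by blast
qed

lemma vle_iff_key_le_diverging:
  assumes v1: "v1 \<in> V" and v2: "v2 \<in> V" and diverge: "a1 \<noteq> a2"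
    and p1: "root_path v1 = r @ a1 # t1" and p2: "root_path v2 = r @ a2 # t2"
  shows "vle G T s lab v1 v2 \<longleftrightarrow> key v1 \<le> key v2"
proof -
  have "r \<noteq> []"
    using hd_root_path[OF v1] hd_root_path[OF v2] p1 p2 diverge by (cases r) auto
  then obtain r' x where r: "r = r' @ [x]"
    by (metis append_butlast_last_id)
  have "set r \<subseteq> set (root_path v2)"
    using p2 by auto
  then have meet: "meet G T s v1 v2 = x"
    using meet_eq_last_common[OF p1 \<open>r \<noteq> []\<close>] diverging_root_paths_disjoint[OF assms] r by simp
  have "v1 \<in> set (a1 # t1)"
    using last_root_path[OF v1] p1 by (metis last_appendR last_in_set list.distinct(1))
  then have "x \<noteq> v1"
    using distinct_root_path[OF v1] p1 r by auto
  moreover have "gdir G T lab x v1 = branch_label a1" "gdir G T lab x v2 = branch_label a2"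
    using gdir_in_root_path[OF v1, of r' x a1 t1] gdir_in_root_path[OF v2, of r' x a2 t2] p1 p2 r
    by simp_all
  moreover have "branch_label a1 \<noteq> branch_label a2"
    using branch_label_inj[OF root_path_non_root[OF v1 p1 \<open>r \<noteq> []\<close>]
        root_path_non_root[OF v2 p2 \<open>r \<noteq> []\<close>] _ diverge]
      parent_in_root_path[OF v1, of r' x a1 t1] parent_in_root_path[OF v2, of r' x a2 t2] p1 p2 r
    by simp
  moreover have "key v1 = map branch_label (tl r) @ branch_label a1 # map branch_label t1"
    "key v2 = map branch_label (tl r) @ branch_label a2 # map branch_label t2"
    using p1 p2 \<open>r \<noteq> []\<close> by (simp_all add: key_def)
  ultimately show ?thesis
    using meet by (simp add: vle_def diverging_list_le_iff)
qed

lemma vle_iff_key_le: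
  assumes v1: "v1 \<in> V" and v2: "v2 \<in> V"
  shows "vle G T s lab v1 v2 \<longleftrightarrow> key v1 \<le> key v2"
proof (cases rule: prefix_cases[of "root_path v1" "root_path v2"])
  case 1
  then show ?thesis
    using vle_if_prefix[OF v1] by (auto simp: prefix_def)
next
  case 2
  then show ?thesis
    using not_vle_if_strict_prefix[OF v1 v2] by (auto simp: strict_prefix_def prefix_def)
next
  case 3
  then show ?thesis
    using vle_iff_key_le_diverging[OF v1 v2] parallel_decomp by metis
qed

section \<open>The vector field \<open>W\<close>\<close>

definition principal :: "('v,'e) cell \<Rightarrow> 'v \<Rightarrow> bool" where
  "principal c v \<longleftrightarrow> unbl c v \<and> (\<forall>w. unbl c w \<longrightarrow> key v \<le> key w)"

lemma principal_exists:
  assumes "is_cell G n c" and "unbl c w"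
  obtains v where "principal c v"
proof -
  have fin: "finite (key ` {v. unbl c v})"
    using unblocked_verts[OF assms(1)] finite_verts by (auto intro: finite_subset)
  obtain v where "unbl c v" "key v = Min (key ` {v. unbl c v})"
    using Min_in[OF fin] assms(2) by fastforce
  then have "principal c v"
    using fin by (simp add: principal_def)
  then show ?thesis ..
qed

lemma principal_unique:
  assumes "is_cell G n c" and "principal c v" and "principal c w"
  shows "v = w"
proof -
  have "key v = key w"
    using assms(2,3) by (auto simp: principal_def intro: order.antisym)
  then show ?thesis
    using inj_on_key unblocked_verts[OF assms(1)] assms(2,3) by (auto simp: principal_def dest: inj_onD)
qed

lemma principal_red_eq:
  assumes "is_cell G n c" and "principal c v"
  shows "principal_red G T s lab c = Some (red c v)"
proof -
  have "vle G T s lab v' w \<longleftrightarrow> key v' \<le> key w" if "unbl c v'" "unbl c w" for v' w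
    using vle_iff_key_le unblocked_verts[OF assms(1) that(1)] unblocked_verts[OF assms(1) that(2)]
    by blast
  then have iff: "principal c v' \<longleftrightarrow> unbl c v' \<and> (\<forall>w. unbl c w \<longrightarrow> vle G T s lab v' w)" for v'
    unfolding principal_def by blast
  have "(THE v. unbl c v \<and> (\<forall>w. unbl c w \<longrightarrow> vle G T s lab v w)) = v"
  proof (rule the_equality)
    show "unbl c v \<and> (\<forall>w. unbl c w \<longrightarrow> vle G T s lab v w)"
      using iff assms(2) by blast
  next
    fix v'
    assume "unbl c v' \<and> (\<forall>w. unbl c w \<longrightarrow> vle G T s lab v' w)"
    then show "v' = v"
      using iff principal_unique[OF assms(1) _ assms(2)] by blast
  qed
  then show ?thesis
    using assms(2) by (auto simp: principal_red_def principal_def)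
qed

lemma principal_red_SomeE:
  assumes "is_cell G n c" and "principal_red G T s lab c = Some \<tau>"
  obtains v where "principal c v" and "\<tau> = red c v"
  using assms principal_exists[OF assms(1)] principal_red_eq[OF assms(1)]
  by (metis option.distinct(1) option.inject principal_red_def)

text \<open>If \<open>m\<close> were unblocked in \<open>c\<close>, the minimality of both \<open>b\<close> and \<open>m\<close> would force \<open>m = b\<close>; so
  \<open>unblocked_unreduce_cases\<close> applies.\<close>
lemma principal_unreduce_sibling:
  assumes c: "is_cell G n c" and b: "principal c b" and e: "Inr (down a) \<in> c" and a: "a \<in> V" "a \<noteq> s"
    and m: "principal (unreduce c a) m" and "unbl (unreduce c a) b" and "m \<noteq> a" and "m \<noteq> b"
  shows "parent m = parent a"
proof -
  have "unbl c m \<or> parent m = parent a"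
    using m \<open>m \<noteq> a\<close> unblocked_unreduce_cases[OF c e a] by (simp add: principal_def)
  moreover have "\<not> unbl c m"
  proof
    assume "unbl c m"
    then have "key m = key b" "m \<in> V" "b \<in> V"
      using b m \<open>unbl (unreduce c a) b\<close> unblocked_verts[OF c]
      by (auto simp: principal_def intro: order.antisym)
    then show False
      using inj_on_key \<open>m \<noteq> b\<close> by (auto dest: inj_onD)
  qed
  ultimately show ?thesis
    by blast
qed

lemma principal_unreduce_descent:
  assumes c: "is_cell G n c" and e: "Inr (down a) \<in> c" and a: "a \<in> V" "a \<noteq> s"
    and pa: "principal (unreduce c a) a"
    and \<nu>: "is_cell G n \<nu>" and y: "principal \<nu> y" and \<mu>: "unreduce c a = red \<nu> y"
  shows "y \<in> V" and "y \<noteq> s" and "key y < key a" and "Inr (down y) \<in> c"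
    and "principal (unreduce c y) y"
proof -
  have "unbl \<nu> y"
    using y by (simp add: principal_def)
  then show "y \<in> V" "y \<noteq> s"
    using unblocked_verts[OF \<nu>] by auto
  have \<nu>_eq: "\<nu> = unreduce (unreduce c a) y"
    using reduce_cell(3)[OF \<nu> \<open>unbl \<nu> y\<close>] \<mu> by simp
  have "y \<noteq> a"
    using \<mu> by (auto simp: elem_red_def unreduce_def)
  then have "down y \<noteq> down a"
    using down_inj \<open>y \<in> V\<close> \<open>y \<noteq> s\<close> a by blast
  have "Inr (down y) \<in> unreduce c a"
    using \<mu> by (simp add: elem_red_def)
  then show ey: "Inr (down y) \<in> c"
    by (simp add: unreduce_def)
  have "unbl \<nu> a"
    using unblocked_unreduce_mono[OF \<open>Inr (down y) \<in> unreduce c a\<close> \<open>y \<in> V\<close> \<open>y \<noteq> s\<close>] pa \<nu>_eq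
    by (simp add: principal_def)
  then show "key y < key a"
    using y \<open>y \<noteq> a\<close> inj_on_key \<open>y \<in> V\<close> a by (auto simp: principal_def inj_on_def order_less_le)
  have ea: "Inr (down a) \<in> unreduce c y"
    using e \<open>down y \<noteq> down a\<close> by (simp add: unreduce_def)
  have "\<nu> = unreduce (unreduce c y) a"
    using \<nu>_eq unreduce_commute by metis
  then show "principal (unreduce c y) y"
    using y unreduce_cell(3)[OF c ey \<open>y \<in> V\<close> \<open>y \<noteq> s\<close>] unblocked_unreduce_mono[OF ea a]
    by (auto simp: principal_def)
qed

context
  fixes n :: nat
begin

abbreviation cell :: "('v,'e) cell \<Rightarrow> bool" where
  "cell \<equiv> is_cell G n"

abbreviation W :: "('v,'e) cell \<Rightarrow> ('v,'e) cell option" where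
  "W \<equiv> Wfield G n T s lab"

definition in_W_image :: "('v,'e) cell \<Rightarrow> bool" where
  "in_W_image c \<longleftrightarrow> (\<exists>c'. cell c' \<and> Suc (cdim c') = cdim c \<and> W c' = Some c)"

lemma W_eq: "W c = (if in_W_image c then None else principal_red G T s lab c)"
proof (cases "cdim c")
  case (Suc i)
  then have "in_W_image c \<longleftrightarrow> (\<exists>c'. cell c' \<and> cdim c' = i \<and> Wdim G n T s lab i c' = Some c)"
    by (auto simp: in_W_image_def Wfield_def)
  then show ?thesis
    using Suc by (simp add: Wfield_def)
qed (simp add: Wfield_def in_W_image_def)

lemma W_SomeE:
  assumes "cell c" and "W c = Some \<tau>"
  obtains v where "\<not> in_W_image c" and "principal c v" and "\<tau> = red c v"
  using assms principal_red_SomeE[OF assms(1)] W_eq[of c] by (metis option.distinct(1))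

lemma W_eq_red: "cell c \<Longrightarrow> \<not> in_W_image c \<Longrightarrow> principal c v \<Longrightarrow> W c = Some (red c v)"
  using W_eq principal_red_eq by simp

lemma card_key_less_mono:
  assumes "y \<in> V" and "key y < key a"
  shows "card {w \<in> V. key w < key y} < card {w \<in> V. key w < key a}"
  using assms finite_verts by (intro psubset_card_mono) auto

text \<open>By induction on the rank of \<open>a\<close>: if the undone cell is itself a \<open>W\<close>-image, its preimage is reduced
  from a vertex \<open>y\<close> of smaller key, and the claim for \<open>y\<close> applies.\<close>
lemma in_W_image_if_principal_unreduce:
  assumes "cell c" and "Inr (down a) \<in> c" and "a \<in> V" "a \<noteq> s" and "principal (unreduce c a) a"
  shows "in_W_image c"
  using assms
proof (induction "card {w \<in> V. key w < key a}" arbitrary: a rule: less_induct)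
  case less
  note c = less.prems(1) and e = less.prems(2) and a = less.prems(3,4)
  have \<mu>: "cell (unreduce c a)" "cdim c = Suc (cdim (unreduce c a))" "red (unreduce c a) a = c"
    using unreduce_cell[OF c e a] by auto
  show ?case
  proof (cases "in_W_image (unreduce c a)")
    case False
    then have "W (unreduce c a) = Some c"
      using W_eq_red[OF \<mu>(1) False less.prems(5)] \<mu>(3) by simp
    then show ?thesis
      using \<mu> unfolding in_W_image_def by auto
  next
    case True
    then obtain \<nu> y where "cell \<nu>" "principal \<nu> y" "unreduce c a = red \<nu> y"
      unfolding in_W_image_def using W_SomeE by metis
    note descent = principal_unreduce_descent[OF c e a less.prems(5) this]
    then show ?thesis
      using less.hyps[OF card_key_less_mono[OF descent(1,3)] c descent(4,1,2,5)] by blast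
  qed
qed

lemma in_W_image_imp_None: "in_W_image c \<Longrightarrow> W c = None"
  by (simp add: W_eq)

lemma W_inj:
  assumes c: "cell c" and c': "cell c'" and "W c = Some \<tau>" and "W c' = Some \<tau>"
  shows "c = c'"
proof (rule ccontr)
  assume "c \<noteq> c'"
  obtain v where v: "\<not> in_W_image c" "principal c v" "\<tau> = red c v"
    using W_SomeE[OF c assms(3)] by blast
  obtain v' where v': "\<not> in_W_image c'" "principal c' v'" "\<tau> = red c' v'"
    using W_SomeE[OF c' assms(4)] by blast
  have "unbl c v" "unbl c' v'"
    using v(2) v'(2) by (simp_all add: principal_def)
  note collide = reductions_collide[OF c c' this _ \<open>c \<noteq> c'\<close>]
  have V: "v \<in> V" "v \<noteq> s" "v' \<in> V" "v' \<noteq> s"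
    using unblocked_verts[OF c \<open>unbl c v\<close>] unblocked_verts[OF c' \<open>unbl c' v'\<close>] by auto
  have e: "Inr (down v') \<in> c" "Inr (down v) \<in> c'" and d: "unreduce c v' = unreduce c' v"
    using collide v(3) v'(3) by simp_all
  have "unbl (unreduce c v') v'" "unbl (unreduce c v') v"
    using unreduce_cell(3)[OF c e(1) V(3,4)] unblocked_unreduce_mono[OF e(1) V(3,4) \<open>unbl c v\<close>]
    by auto
  then obtain m where m: "principal (unreduce c v') m"
    using principal_exists unreduce_cell(1)[OF c e(1) V(3,4)] by blast
  have "m \<noteq> v"
    using in_W_image_if_principal_unreduce[OF c' e(2) V(1,2)] m d v'(1) by auto
  moreover have "m \<noteq> v'"
    using in_W_image_if_principal_unreduce[OF c e(1) V(3,4)] m v(1) by blast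
  ultimately have "parent m = parent v'" "parent m = parent v"
    using principal_unreduce_sibling[OF c v(2) e(1) V(3,4) m] \<open>unbl (unreduce c v') v\<close>
      principal_unreduce_sibling[OF c' v'(2) e(2) V(1,2)] m d \<open>unbl (unreduce c v') v'\<close>
    by simp_all
  then show False
    using collide v(3) v'(3) by simp
qed

lemma W_props:
  assumes c: "cell c" and "W c = Some \<tau>"
  shows "cell \<tau>" and "cdim \<tau> = Suc (cdim c)" and "regular_face G c \<tau>" and "W \<tau> = None"
proof -
  obtain v where "\<not> in_W_image c" "principal c v" and \<tau>: "\<tau> = red c v"
    using W_SomeE[OF c] assms(2) by metis
  then have v: "unbl c v" "v \<in> V" "v \<noteq> s"
    using unblocked_verts[OF c] by (auto simp: principal_def)
  show "cell \<tau>" "cdim \<tau> = Suc (cdim c)"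
    using reduce_cell[OF c v(1)] \<tau> by auto
  then show "W \<tau> = None"
    using c assms(2) by (intro in_W_image_imp_None) (auto simp: in_W_image_def)
  have "Inr (down v) \<in> \<tau>" "c = insert (Inl v) (\<tau> - {Inr (down v)})"
    using reduce_cell(3)[OF c v(1)] \<tau> by (auto simp: elem_red_def unreduce_def)
  moreover have "src G (down v) \<noteq> tgt G (down v)" "v \<in> {src G (down v), tgt G (down v)}"
    using tree_edge_not_loop down_joins_parent(1) down_ends v(2,3) by auto
  ultimately show "regular_face G c \<tau>"
    unfolding regular_face_def by blast
qed

lemma principal_unreduce_after_swap:
  assumes c: "cell c" and v: "principal c v" and e: "Inr (down a) \<in> c" and a: "a \<in> V" "a \<noteq> s"
    and "a \<noteq> v" and "key a \<le> key v"
    and v': "principal (unreduce (red c v) a) v'" and "key a \<le> key v'"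
  shows "principal (unreduce c a) a"
  unfolding principal_def
proof (intro conjI allI impI)
  show "unbl (unreduce c a) a"
    using unreduce_cell[OF c e a] by blast
  fix w
  assume w: "unbl (unreduce c a) w"
  show "key a \<le> key w"
  proof (cases "w = a \<or> unbl c w")
    case True
    then show ?thesis
      using v \<open>key a \<le> key v\<close> by (auto simp: principal_def)
  next
    case False
    then have "parent w = parent a"
      using unblocked_unreduce_cases[OF c e a w] by blast
    then have "unbl (unreduce (red c v) a) w"
      using unblocked_swap[OF c _ e a \<open>a \<noteq> v\<close> w] v False by (simp add: principal_def)
    then show ?thesis
      using v' \<open>key a \<le> key v'\<close> by (auto simp: principal_def)
  qed
qed

text \<open>Let \<open>a\<close> be the principal vertex of least key along the path. The edge \<open>e(a)\<close> created when reducing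
  from \<open>a\<close> must be removed again, and the cell where this happens is a \<open>W\<close>-image by the previous two
  lemmas.\<close>
lemma no_periodic_swap_sequence:
  assumes "0 < r" and period: "\<And>i. S (i + r) = S i" and cells: "\<And>i. cell (S i)"
    and free: "\<And>i. \<not> in_W_image (S i)" and vm: "\<And>i. principal (S i) (vm i)"
    and xm: "\<And>i. xm i \<in> V \<and> xm i \<noteq> s \<and> xm i \<noteq> vm i \<and> Inr (down (xm i)) \<in> S i"
    and swap: "\<And>i. S (Suc i) = unreduce (red (S i) (vm i)) (xm i)"
  shows False
proof -
  have "S (i mod r + k * r) = S (i mod r)" for i k
  proof (induction k)
    case (Suc k)
    have "i mod r + Suc k * r = (i mod r + k * r) + r"
      by simp
    then show ?case
      using Suc period by metis
  qed simp
  then have "S (i mod r) = S i" for i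
    by (metis mod_div_mult_eq)
  then have vm_mod: "vm (i mod r) = vm i" for i
    using principal_unique cells vm by metis
  obtain i0 where "i0 < r" and least: "\<forall>i<r. key (vm i0) \<le> key (vm i)"
    using Min_in[of "key ` vm ` {..<r}"] Min_le[of "key ` vm ` {..<r}"] \<open>0 < r\<close> by fastforce
  define a where "a = vm i0"
  have a_least: "key a \<le> key (vm i)" for i
    using least vm_mod[of i] \<open>0 < r\<close> by (metis a_def mod_less_divisor)
  have a: "a \<in> V" "a \<noteq> s"
    using unblocked_verts cells vm unfolding a_def principal_def by blast+
  have down_neq: "down (xm i) \<noteq> down a" if "xm i \<noteq> a" for i
    using down_inj xm that a by blast
  have "Inr (down a) \<in> S (Suc i0)"
    using swap[of i0] xm[of i0] down_neq[of i0] by (auto simp: a_def elem_red_def unreduce_def)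
  moreover have "Inr (down a) \<notin> S (Suc i0 + (r - 1))"
    using period[of i0] down_notin_if_unblocked vm[of i0] \<open>0 < r\<close>
    by (simp add: a_def principal_def)
  ultimately obtain j where "Inr (down a) \<in> S j" "Inr (down a) \<notin> S (Suc j)"
    using dec_induct[of "Suc i0" "Suc i0 + (r - 1)" "\<lambda>k. Inr (down a) \<in> S k"] by auto
  moreover have "xm j = a"
    using calculation swap[of j] down_neq[of j] by (auto simp: elem_red_def unreduce_def)
  ultimately have "principal (unreduce (S j) a) a"
    using principal_unreduce_after_swap[OF cells vm _ a _ a_least _ a_least] xm[of j] swap[of j] vm
    by metis
  then show False
    using in_W_image_if_principal_unreduce[OF cells \<open>Inr (down a) \<in> S j\<close> a] free by blast
qed

lemma no_nonstationary_closed_path: "\<not> has_nonstationary_closed_path G n W"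
proof
  assume "has_nonstationary_closed_path G n W"
  then obtain r S p where "0 < r" and cells: "\<And>i. cell (S i) \<and> cdim (S i) = p"
    and period: "\<And>i. S (i + r) = S i"
    and step: "\<And>i. \<exists>\<tau>. W (S i) = Some \<tau> \<and> S (Suc i) \<noteq> S i \<and> face G (S (Suc i)) \<tau>"
    by (rule nonstationary_closed_path_periodic) blast
  have "\<exists>v. \<not> in_W_image (S i) \<and> principal (S i) v \<and> S (Suc i) \<noteq> S i \<and> face G (S (Suc i)) (red (S i) v)"
    for i
    using step[of i] W_SomeE cells by metis
  then obtain vm where vm: "\<And>i. \<not> in_W_image (S i) \<and> principal (S i) (vm i) \<and> S (Suc i) \<noteq> S i \<and>
      face G (S (Suc i)) (red (S i) (vm i))"
    by metis
  have descent: "potential (S (Suc i)) \<le> potential (S i)" for i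
    using potential_face_of_reduce(1) cells vm unfolding principal_def by metis
  have "potential (S (i + r)) = potential (S i)" for i
    using period by simp
  then have "potential (S (Suc i)) = potential (S i)" for i
    using antimono_periodic_const[of "\<lambda>i. potential (S i)" r, OF descent] \<open>0 < r\<close> by blast
  then have "\<exists>x. x \<in> V \<and> x \<noteq> s \<and> x \<noteq> vm i \<and> Inr (down x) \<in> S i \<and>
      S (Suc i) = unreduce (red (S i) (vm i)) x" for i
    using potential_face_of_reduce(2) cells vm unfolding principal_def by metis
  then obtain xm where "\<And>i. xm i \<in> V \<and> xm i \<noteq> s \<and> xm i \<noteq> vm i \<and> Inr (down (xm i)) \<in> S i"
    and "\<And>i. S (Suc i) = unreduce (red (S i) (vm i)) (xm i)"
    by metis
  then show False
    using no_periodic_swap_sequence[of r S vm xm] \<open>0 < r\<close> period cells vm by blast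
qed

lemma W_discrete_gradient: "discrete_gradient_vector_field G n W"
  unfolding discrete_gradient_vector_field_def
  using W_props W_inj no_nonstationary_closed_path by blast

end

end

theorem mainTheorem9:
  fixes G :: "('v,'e) graph" and n :: nat and T :: "'e set" and s :: 'v
    and lab :: "'v \<Rightarrow> 'e \<times> bool \<Rightarrow> nat"
  assumes "wf_graph G" and "connected_graph G" and "1 \<le> n"
    and "spanning_tree G T" and "s \<in> verts G" and "tdegree G T s = 1"
    and "good_labelling G T s lab"
  shows "\<not> has_nonstationary_closed_path G n (Wfield G n T s lab) \<and>
         discrete_gradient_vector_field G n (Wfield G n T s lab)"
proof -
  interpret labelled_rooted_tree G T s lab
    using assms by unfold_locales (auto simp: good_labelling_def bij_betw_def)
  show ?thesis
    using no_nonstationary_closed_path W_discrete_gradient by blast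
qed

end
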